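(* Let $M$ be a finitary matroid on $E$, $B$ a base of $M$, $n\ge 0$ an integer, $e_0,\dots,e_n\in E\setminus B$ pairwise distinct, and $F\subseteq B$ with $|F|\le n$. Then there exist $i^*\le n$ and a circuit $C$ of $M$ with \[e_{i^*}\in C\subseteq\bigcup_{i^*\le i\le n}C_M(e_i,B)\setminus F.\]
   Context: $C_M(e,B)$ denotes the fundamental circuit of $e\notin B$ on the base $B$, i.e. the unique circuit of $M$ contained in $B\cup\{e\}$. *)

theory Defs
  imports Main
begin

text \<open>A (possibly infinite) matroid on ground set E, given by its independent sets,
  following the independence axioms of Bruhn, Diestel, Kriesell, Pendavingh, Wollan.\<close>

definition maximal_indep :: "'a set \<Rightarrow> ('a set \<Rightarrow> bool) \<Rightarrow> 'a set \<Rightarrow> 'a set \<Rightarrow> bool" where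
  "maximal_indep E indep X I \<longleftrightarrow> indep I \<and> I \<subseteq> X \<and>
     (\<forall>J. indep J \<and> I \<subseteq> J \<and> J \<subseteq> X \<longrightarrow> J = I)"

definition matroid :: "'a set \<Rightarrow> ('a set \<Rightarrow> bool) \<Rightarrow> bool" where
  "matroid E indep \<longleftrightarrow>
     (\<forall>I. indep I \<longrightarrow> I \<subseteq> E) \<and>
     indep {} \<and>
     (\<forall>I J. indep J \<and> I \<subseteq> J \<longrightarrow> indep I) \<and>
     (\<forall>I J. indep I \<and> \<not> maximal_indep E indep E I \<and> maximal_indep E indep E J
        \<longrightarrow> (\<exists>x\<in>J - I. indep (insert x I))) \<and>
     (\<forall>I X. indep I \<and> I \<subseteq> X \<and> X \<subseteq> E \<longrightarrow>
        (\<exists>J. I \<subseteq> J \<and> maximal_indep E indep X J))"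

definition base :: "'a set \<Rightarrow> ('a set \<Rightarrow> bool) \<Rightarrow> 'a set \<Rightarrow> bool" where
  "base E indep B \<longleftrightarrow> maximal_indep E indep E B"

definition circuit :: "'a set \<Rightarrow> ('a set \<Rightarrow> bool) \<Rightarrow> 'a set \<Rightarrow> bool" where
  "circuit E indep C \<longleftrightarrow> C \<subseteq> E \<and> \<not> indep C \<and> (\<forall>x\<in>C. indep (C - {x}))"

definition finitary_matroid :: "'a set \<Rightarrow> ('a set \<Rightarrow> bool) \<Rightarrow> bool" where
  "finitary_matroid E indep \<longleftrightarrow> matroid E indep \<and> (\<forall>C. circuit E indep C \<longrightarrow> finite C)"

definition fund_circuit :: "'a set \<Rightarrow> ('a set \<Rightarrow> bool) \<Rightarrow> 'a \<Rightarrow> 'a set \<Rightarrow> 'a set" where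
  "fund_circuit E indep e B = (THE C. circuit E indep C \<and> C \<subseteq> insert e B)"

end

theory Submission
  imports Defs
begin

text \<open>Let \<open>A = {e\<^sub>0, \<dots>, e\<^sub>n}\<close>. The set \<open>S = A \<union> (B \<inter> \<Union>\<^sub>a C(a,B) - F)\<close> is dependent:
  otherwise it extends to a base \<open>K\<close> with \<open>K - B = A\<close>, so \<open>|B - K| = |A| > |F|\<close>, and an element
  \<open>b \<in> B - K - F\<close> can be exchanged against some \<open>a \<in> A\<close>, forcing \<open>b \<in> C(a,B) \<subseteq> S \<subseteq> K\<close>.
  Hence \<open>S\<close> contains a circuit \<open>D\<close>, which avoids \<open>F\<close> and meets \<open>A\<close>; let \<open>e\<^sub>i\<close> be the element
  of \<open>D \<inter> A\<close> of least index. Every circuit lies in the union of the fundamental circuits of its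
  elements outside \<open>B\<close>, so \<open>D \<subseteq> \<Union>\<^bsub>j \<ge> i\<^esub> C(e\<^sub>j,B)\<close>.\<close>

lemma matroid_indep_subset_ground: "matroid E indep \<Longrightarrow> indep I \<Longrightarrow> I \<subseteq> E"
  unfolding matroid_def by (elim conjE) metis

lemma matroid_indep_subset: "matroid E indep \<Longrightarrow> indep J \<Longrightarrow> I \<subseteq> J \<Longrightarrow> indep I"
  unfolding matroid_def by (elim conjE) metis

lemma matroid_augment:
  "matroid E indep \<Longrightarrow> indep I \<Longrightarrow> \<not> base E indep I \<Longrightarrow> base E indep J
    \<Longrightarrow> \<exists>x\<in>J - I. indep (insert x I)"
  unfolding matroid_def base_def by (elim conjE) metis

lemma matroid_maximal_indep_exists:
  "matroid E indep \<Longrightarrow> indep I \<Longrightarrow> I \<subseteq> X \<Longrightarrow> X \<subseteq> E \<Longrightarrow> \<exists>J. I \<subseteq> J \<and> maximal_indep E indep X J"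
  unfolding matroid_def by (elim conjE) metis

lemma base_indep: "base E indep B \<Longrightarrow> indep B"
  and base_subset_ground: "base E indep B \<Longrightarrow> B \<subseteq> E"
  and base_eq_if_indep_superset: "base E indep B \<Longrightarrow> indep J \<Longrightarrow> B \<subseteq> J \<Longrightarrow> J \<subseteq> E \<Longrightarrow> J = B"
  unfolding base_def maximal_indep_def by blast+

lemma base_not_indep_insert:
  "base E indep B \<Longrightarrow> e \<in> E \<Longrightarrow> e \<notin> B \<Longrightarrow> \<not> indep (insert e B)"
  using base_eq_if_indep_superset base_subset_ground by blast

lemma base_subset_base_eq: "base E indep B \<Longrightarrow> base E indep B' \<Longrightarrow> B' \<subseteq> B \<Longrightarrow> B' = B"
  using base_eq_if_indep_superset base_indep base_subset_ground by metis

lemma maximal_indep_base: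
  assumes m: "matroid E indep" and B: "base E indep B" and "B \<subseteq> X"
    and K: "maximal_indep E indep X K"
  shows "base E indep K"
proof (rule ccontr)
  have K_max: "indep K" "K \<subseteq> X" "\<And>J. indep J \<Longrightarrow> K \<subseteq> J \<Longrightarrow> J \<subseteq> X \<Longrightarrow> J = K"
    using K unfolding maximal_indep_def by blast+
  assume "\<not> base E indep K"
  then obtain x where "x \<in> B - K" "indep (insert x K)"
    using matroid_augment[OF m K_max(1) _ B] by blast
  moreover have "insert x K \<subseteq> X" using \<open>x \<in> B - K\<close> K_max(2) \<open>B \<subseteq> X\<close> by blast
  ultimately show False using K_max(3)[of "insert x K"] by blast
qed

lemma base_extend_within:
  assumes m: "matroid E indep" and B: "base E indep B" and "indep I"
    and "I \<subseteq> X" "B \<subseteq> X" "X \<subseteq> E"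
  shows "\<exists>K. base E indep K \<and> I \<subseteq> K \<and> K \<subseteq> X"
proof -
  obtain K where K: "I \<subseteq> K" "maximal_indep E indep X K"
    using matroid_maximal_indep_exists[OF m \<open>indep I\<close> \<open>I \<subseteq> X\<close> \<open>X \<subseteq> E\<close>] by blast
  have "base E indep K" using maximal_indep_base[OF m B \<open>B \<subseteq> X\<close> K(2)] .
  moreover have "K \<subseteq> X" using K(2) unfolding maximal_indep_def by blast
  ultimately show ?thesis using K(1) by blast
qed

lemma base_exchange:
  assumes m: "matroid E indep" and B: "base E indep B" and K: "base E indep K"
    and b: "b \<in> B - K"
  shows "\<exists>x\<in>K - B. indep (insert x (B - {b}))"
proof -
  have "indep (B - {b})" using matroid_indep_subset[OF m base_indep[OF B]] by blast
  moreover have "\<not> base E indep (B - {b})" using base_subset_base_eq[OF B] b by blast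
  ultimately obtain x where "x \<in> K - (B - {b})" "indep (insert x (B - {b}))"
    using matroid_augment[OF m _ _ K] by blast
  with b show ?thesis by blast
qed

lemma base_swap_base:
  assumes m: "matroid E indep" and K: "base E indep K" and "y \<in> K" "x \<notin> K"
    and indep_swap: "indep (insert x (K - {y}))"
  shows "base E indep (insert x (K - {y}))"
proof (rule ccontr)
  assume "\<not> base E indep (insert x (K - {y}))"
  then obtain w where "w \<in> K - insert x (K - {y})" "indep (insert w (insert x (K - {y})))"
    using matroid_augment[OF m indep_swap _ K] by blast
  moreover from this have "insert w (insert x (K - {y})) = insert x K" using \<open>y \<in> K\<close> by blast
  ultimately have "indep (insert x K)" by simp
  then have "insert x K = K"
    using base_eq_if_indep_superset[OF K] matroid_indep_subset_ground[OF m] by blast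
  with \<open>x \<notin> K\<close> show False by blast
qed

lemma card_base_diff:
  assumes m: "matroid E indep" and B: "base E indep B"
  shows "base E indep K \<Longrightarrow> finite (K - B) \<Longrightarrow> finite (B - K) \<and> card (B - K) = card (K - B)"
proof (induction "card (K - B)" arbitrary: K)
  case 0
  then have "K = B" using base_subset_base_eq[OF B] by auto
  then show ?case by simp
next
  case (Suc k K)
  then obtain y where y: "y \<in> K - B" by (metis card.empty ex_in_conv nat.distinct(1))
  obtain x where x: "x \<in> B - K" "indep (insert x (K - {y}))"
    using base_exchange[OF m Suc.prems(1) B y] by blast
  define K' where "K' = insert x (K - {y})"
  have "base E indep K'" unfolding K'_def using base_swap_base[OF m Suc.prems(1)] x y by blast
  moreover have "K' - B = (K - B) - {y}" using x unfolding K'_def by auto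
  ultimately have "finite (B - K') \<and> card (B - K') = k"
    using Suc y by (metis card_Diff_singleton diff_Suc_1 finite_Diff)
  moreover have "B - K = insert x (B - K')" "x \<notin> B - K'" using x y unfolding K'_def by auto
  ultimately show ?case using Suc.hyps(2) by simp
qed

lemma circuit_not_subset_indep:
  "matroid E indep \<Longrightarrow> circuit E indep C \<Longrightarrow> indep I \<Longrightarrow> \<not> C \<subseteq> I"
  unfolding circuit_def using matroid_indep_subset by blast

lemma circuit_subset_eq:
  assumes m: "matroid E indep" and "circuit E indep C" "circuit E indep C'" "C \<subseteq> C'"
  shows "C = C'"
proof (rule ccontr)
  assume "C \<noteq> C'"
  then obtain x where "x \<in> C'" "C \<subseteq> C' - {x}" using \<open>C \<subseteq> C'\<close> by blast
  with assms show False unfolding circuit_def using matroid_indep_subset[OF m] by blast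
qed

lemma dependent_contains_circuit:
  "finite X \<Longrightarrow> X \<subseteq> E \<Longrightarrow> \<not> indep X \<Longrightarrow> \<exists>C\<subseteq>X. circuit E indep C"
proof (induction X rule: finite_psubset_induct)
  case (psubset X)
  show ?case
  proof (cases "\<forall>x\<in>X. indep (X - {x})")
    case True
    with psubset.prems show ?thesis unfolding circuit_def by blast
  next
    case False
    then obtain x where "x \<in> X" "\<not> indep (X - {x})" by blast
    with psubset show ?thesis by (metis Diff_subset order.trans psubsetI subset_Diff_insert)
  qed
qed

lemma fund_circuit_candidate_subset:
  assumes m: "matroid E indep" and B: "base E indep B"
    and C: "circuit E indep C" "C \<subseteq> insert e B"
  shows "insert e {b\<in>B. indep (insert e (B - {b}))} \<subseteq> C"
proof -
  have "e \<in> C"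
    using C circuit_not_subset_indep[OF m C(1) base_indep[OF B]] by blast
  moreover have "b \<in> C" if "b \<in> B" "indep (insert e (B - {b}))" for b
    using C circuit_not_subset_indep[OF m C(1) that(2)] by blast
  ultimately show ?thesis by blast
qed

lemma circuit_fund_circuit_candidate:
  assumes m: "matroid E indep" and B: "base E indep B" and e: "e \<in> E" "e \<notin> B"
  shows "circuit E indep (insert e {b\<in>B. indep (insert e (B - {b}))})"
    (is "circuit E indep ?C")
proof -
  have BE: "insert e B \<subseteq> E" using base_subset_ground[OF B] e by blast
  have "\<not> indep ?C"
  proof
    assume "indep ?C"
    then obtain K where K: "base E indep K" "?C \<subseteq> K" "K \<subseteq> insert e B"
      using base_extend_within[OF m B _ _ _ BE] by blast
    have "K \<noteq> insert e B" using base_indep[OF K(1)] base_not_indep_insert[OF B e] by metis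
    with K obtain b where b: "b \<in> B - K" by blast
    then obtain x where "x \<in> K - B" "indep (insert x (B - {b}))"
      using base_exchange[OF m B K(1)] by blast
    moreover from this(1) have "x = e" using K(3) by blast
    ultimately have "b \<in> ?C" using b by simp
    with K(2) b show False by blast
  qed
  moreover have "indep (?C - {x})" if "x \<in> ?C" for x
  proof (cases "x = e")
    case True
    then have "?C - {x} \<subseteq> B" by blast
    then show ?thesis by (rule matroid_indep_subset[OF m base_indep[OF B]])
  next
    case False
    with that have "indep (insert e (B - {x}))" by simp
    then show ?thesis by (rule matroid_indep_subset[OF m]) blast
  qed
  ultimately show ?thesis unfolding circuit_def using BE by blast
qed

lemma fund_circuit_eq:
  assumes m: "matroid E indep" and B: "base E indep B" and e: "e \<in> E" "e \<notin> B"
  shows "fund_circuit E indep e B = insert e {b\<in>B. indep (insert e (B - {b}))}"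
    (is "_ = ?C")
  unfolding fund_circuit_def
proof (rule the_equality)
  show "circuit E indep ?C \<and> ?C \<subseteq> insert e B"
    using circuit_fund_circuit_candidate[OF assms] by blast
  fix C assume "circuit E indep C \<and> C \<subseteq> insert e B"
  then have C: "circuit E indep C" "C \<subseteq> insert e B" by blast+
  show "C = ?C"
    using circuit_subset_eq[OF m circuit_fund_circuit_candidate[OF assms] C(1)
      fund_circuit_candidate_subset[OF m B C]] by (rule sym)
qed

lemma circuit_fund_circuit:
  "matroid E indep \<Longrightarrow> base E indep B \<Longrightarrow> e \<in> E \<Longrightarrow> e \<notin> B
    \<Longrightarrow> circuit E indep (fund_circuit E indep e B)"
  by (simp add: fund_circuit_eq circuit_fund_circuit_candidate)

lemma fund_circuit_exchange:
  assumes m: "matroid E indep" and B: "base E indep B" and K: "base E indep K"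
    and "b \<in> B - K"
  shows "\<exists>x\<in>K - B. b \<in> fund_circuit E indep x B"
proof -
  obtain x where x: "x \<in> K - B" "indep (insert x (B - {b}))"
    using base_exchange[OF m B K \<open>b \<in> B - K\<close>] by blast
  then have "x \<in> E" using base_subset_ground[OF K] by blast
  with x \<open>b \<in> B - K\<close> have "b \<in> fund_circuit E indep x B" by (simp add: fund_circuit_eq[OF m B])
  with x show ?thesis by blast
qed

lemma circuit_subset_Union_fund_circuit:
  assumes m: "matroid E indep" and B: "base E indep B" and D: "circuit E indep D"
  shows "D \<subseteq> (\<Union>x\<in>D - B. fund_circuit E indep x B)"
proof
  fix d assume "d \<in> D"
  have DE: "D \<subseteq> E" using D unfolding circuit_def by blast
  show "d \<in> (\<Union>x\<in>D - B. fund_circuit E indep x B)"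
  proof (cases "d \<in> B")
    case False
    have "d \<in> E" using \<open>d \<in> D\<close> DE by blast
    with False have "d \<in> fund_circuit E indep d B" by (simp add: fund_circuit_eq[OF m B])
    with \<open>d \<in> D\<close> False show ?thesis by blast
  next
    case True
    have "indep (D - {d})" using D \<open>d \<in> D\<close> unfolding circuit_def by blast
    then obtain K where K: "base E indep K" "D - {d} \<subseteq> K" "K \<subseteq> B \<union> D"
      using base_extend_within[OF m B _ _ _ Un_least[OF base_subset_ground[OF B] DE]] by blast
    have "d \<notin> K"
      using K circuit_not_subset_indep[OF m D base_indep[OF K(1)]] by blast
    then obtain x where "x \<in> K - B" "d \<in> fund_circuit E indep x B"
      using fund_circuit_exchange[OF m B K(1)] True by blast
    with K show ?thesis by blast
  qed
qed

lemma fund_circuit_span_dependent: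
  assumes m: "matroid E indep" and B: "base E indep B"
    and A: "A \<subseteq> E - B" "finite A" and F: "finite F" "card F < card A"
  shows "\<not> indep (A \<union> (B \<inter> (\<Union>a\<in>A. fund_circuit E indep a B) - F))"
    (is "\<not> indep ?S")
proof
  assume "indep ?S"
  moreover have "?S \<union> B \<subseteq> E" using A base_subset_ground[OF B] by blast
  ultimately obtain K where K: "base E indep K" "?S \<subseteq> K" "K \<subseteq> ?S \<union> B"
    using base_extend_within[OF m B _ Un_upper1 Un_upper2] by blast
  have "K - B = A" using K A by blast
  then have "card F < card (B - K)" using card_base_diff[OF m B K(1)] A F by simp
  then obtain b where "b \<in> B - K" "b \<notin> F" using F(1) by (metis card_mono not_le subsetI)
  moreover obtain x where "x \<in> K - B" "b \<in> fund_circuit E indep x B"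
    using fund_circuit_exchange[OF m B K(1) \<open>b \<in> B - K\<close>] by blast
  ultimately show False using K \<open>K - B = A\<close> by blast
qed

lemma exists_least_index_image:
  fixes e :: "'b::wellorder \<Rightarrow> 'a"
  assumes "X \<subseteq> e ` {..n}" "X \<noteq> {}"
  shows "\<exists>i\<le>n. e i \<in> X \<and> X \<subseteq> e ` {i..n}"
proof -
  obtain x where "x \<in> X" using assms(2) by blast
  moreover from this obtain j0 where "j0 \<le> n" "x = e j0" using assms(1) by blast
  ultimately have j0: "j0 \<le> n \<and> e j0 \<in> X" by simp
  define i where "i = (LEAST j. j \<le> n \<and> e j \<in> X)"
  have i: "i \<le> n \<and> e i \<in> X"
    unfolding i_def by (rule LeastI[where P = "\<lambda>j. j \<le> n \<and> e j \<in> X", OF j0])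
  have "X \<subseteq> e ` {i..n}"
  proof
    fix x assume "x \<in> X"
    then obtain j where j: "j \<le> n" "x = e j" "e j \<in> X" using assms(1) by blast
    then have "i \<le> j" unfolding i_def by (simp add: Least_le)
    with j show "x \<in> e ` {i..n}" by auto
  qed
  with i show ?thesis by blast
qed

lemma finite_fund_circuit:
  assumes "finitary_matroid E indep" "base E indep B" "e \<in> E" "e \<notin> B"
  shows "finite (fund_circuit E indep e B)"
proof -
  have m: "matroid E indep" and "\<forall>C. circuit E indep C \<longrightarrow> finite C"
    using assms(1) by (simp_all add: finitary_matroid_def)
  with circuit_fund_circuit[OF m assms(2-4)] show ?thesis by blast
qed

theorem lemma3p3:
  fixes E :: "'a set" and indep :: "'a set \<Rightarrow> bool" and B F :: "'a set"
    and n :: nat and e :: "nat \<Rightarrow> 'a"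
  assumes "finitary_matroid E indep"
    and "base E indep B"
    and "\<forall>i\<le>n. e i \<in> E - B"
    and "inj_on e {..n}"
    and "F \<subseteq> B" and "finite F" and "card F \<le> n"
  shows "\<exists>i\<le>n. \<exists>C. circuit E indep C \<and> e i \<in> C \<and>
           C \<subseteq> (\<Union>j\<in>{i..n}. fund_circuit E indep (e j) B) - F"
proof -
  have m: "matroid E indep" using assms(1) by (simp add: finitary_matroid_def)
  have B: "base E indep B" by fact
  define A where "A = e ` {..n}"
  define S where "S = A \<union> (B \<inter> (\<Union>a\<in>A. fund_circuit E indep a B) - F)"
  have A: "A \<subseteq> E - B" "finite A" "card A = Suc n"
    using assms(3) card_image[OF assms(4)] unfolding A_def by auto
  moreover have "\<forall>a\<in>A. finite (fund_circuit E indep a B)"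
    using A(1) finite_fund_circuit[OF assms(1) B] by blast
  ultimately have "finite S" "S \<subseteq> E" using base_subset_ground[OF B] unfolding S_def by auto
  moreover have "\<not> indep S"
    unfolding S_def
    by (rule fund_circuit_span_dependent[OF m B A(1,2) assms(6)]) (use A(3) assms(7) in simp)
  ultimately obtain D where D: "D \<subseteq> S" "circuit E indep D"
    using dependent_contains_circuit[of S E indep] by blast
  have "D - B \<subseteq> A" using D(1) unfolding S_def by blast
  moreover have "D - B \<noteq> {}" using circuit_not_subset_indep[OF m D(2) base_indep[OF B]] by blast
  ultimately obtain i where i: "i \<le> n" "e i \<in> D" "D - B \<subseteq> e ` {i..n}"
    using exists_least_index_image[of "D - B" e n] unfolding A_def by blast
  then have "D \<subseteq> (\<Union>x\<in>e ` {i..n}. fund_circuit E indep x B)"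
    using circuit_subset_Union_fund_circuit[OF m B D(2)] by (meson UN_mono order.trans order_refl)
  moreover have "S \<inter> F = {}" using A(1) assms(5) unfolding S_def by blast
  ultimately have "D \<subseteq> (\<Union>j\<in>{i..n}. fund_circuit E indep (e j) B) - F" using D(1) by auto
  then show ?thesis using i D(2) by blast
qed

end
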